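(* Let $x\in(0,\tfrac12)$ be irrational. (a) If $B(x)<\infty$, then $B(-x)<\infty$ and $$B^-(x):=\tfrac12\bigl(B(x)-B(-x)\bigr)=\frac{x}{2}\log\frac{1-x}{x}.$$ (b) If the series $W(x)$ converges, then the series $W(-x)$ converges and $$W^+(x):=\tfrac12\bigl(W(x)+W(-x)\bigr)=\frac{x}{2}\log\frac{1-x}{x}-\log(1-x).$$ In particular, since $B^-$ is odd and $1$-periodic and $W^+$ is even and $1$-periodic, $B^-$ and $W^+$ are uniformly bounded on the set of irrationals where they are defined.
   Context: For real $x$ let $\{x\}=x-\lfloor x\rfloor$ and let $A(y)=\{1/y\}$ for $y\in(0,1)$ (Gauss map), with iterates $A^j$, $A^0=\mathrm{id}$, and empty products equal to $1$. For irrational $x$ put $y=\{x\}$ and define $$B(x)=\sum_{j\ge0}\Bigl(\prod_{k=0}^{j-1}A^k(y)\Bigr)\log\frac{1}{A^j(y)}\in[0,+\infty],\qquad W(x)=\sum_{j\ge0}(-1)^j\Bigl(\prod_{k=0}^{j-1}A^k(y)\Bigr)\log\frac{1}{A^j(y)},$$ the latter being said to converge when its partial sums converge. Equivalently, $B$ and $W$ are $1$-periodic and satisfy, for irrational $x\in(0,1)$, $B(x)=-\log x+xB(1/x)$ and $W(x)=-\log x-xW(1/x)$ (with $W(x)$ convergent iff $W(1/x)$ convergent). *)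

theory Defs
  imports "HOL-Analysis.Analysis"
begin

definition gauss :: "real \<Rightarrow> real" where
  "gauss y = frac (1 / y)"

definition B_term :: "real \<Rightarrow> nat \<Rightarrow> real" where
  "B_term x j = (\<Prod>k<j. (gauss ^^ k) (frac x)) * ln (1 / (gauss ^^ j) (frac x))"

definition W_term :: "real \<Rightarrow> nat \<Rightarrow> real" where
  "W_term x j = (-1) ^ j * B_term x j"

text \<open>B(x) as a value in [0,+\<infinity>] (terms are nonnegative for irrational x).\<close>
definition Bfun :: "real \<Rightarrow> ereal" where
  "Bfun x = (\<Sum>j. ereal (B_term x j))"

definition W_converges :: "real \<Rightarrow> bool" where
  "W_converges x \<longleftrightarrow> convergent (\<lambda>n. \<Sum>j<n. W_term x j)"

definition Wfun :: "real \<Rightarrow> real" where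
  "Wfun x = lim (\<lambda>n. \<Sum>j<n. W_term x j)"

definition Bminus :: "real \<Rightarrow> real" where
  "Bminus x = (real_of_ereal (Bfun x) - real_of_ereal (Bfun (-x))) / 2"

definition Wplus :: "real \<Rightarrow> real" where
  "Wplus x = (Wfun x + Wfun (-x)) / 2"

end

theory Submission imports Defs begin

text \<open>
  Termwise the series obey \<open>B_term y (j+1) = {y} \<cdot> B_term (A {y}) j\<close>. For \<open>0 < x < 1/2\<close> the
  Gauss orbit of \<open>{-x} = 1 - x\<close> runs \<open>1 - x\<close>, \<open>x/(1 - x)\<close>, and then joins the orbit of \<open>x\<close>,
  since \<open>A (x/(1 - x)) = {1/x - 1} = A x\<close>; as \<open>(1 - x) \<cdot> x/(1 - x) = x\<close>, also the products agree,
  so \<open>B_term (-x) (j+2) = B_term x (j+1)\<close>. The series at \<open>x\<close> and \<open>-x\<close> thus share their tails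
  (up to sign for \<open>W\<close>), and \<open>B\<^sup>-\<close>, \<open>W\<^sup>+\<close> reduce to finitely many explicit terms. For the
  uniform bounds, \<open>B\<^sup>-\<close> and \<open>W\<^sup>+\<close> depend only on \<open>{x}\<close> and are odd resp. even, so every
  irrational point reduces to one with \<open>{x} \<in> (0, 1/2)\<close>.
\<close>

lemma frac_gauss [simp]: "frac (gauss y) = gauss y"
  by (simp add: gauss_def)

lemma gauss_orbit_bounds: "0 \<le> (gauss ^^ k) (frac x) \<and> (gauss ^^ k) (frac x) < 1"
  by (cases k) (auto simp: gauss_def frac_lt_1)

lemma ln_inverse_nonneg:
  assumes "0 \<le> (y::real)" "y < 1"
  shows "0 \<le> ln (1 / y)"
  using assms by (cases "y = 0") (simp_all add: le_divide_eq)

lemma B_term_nonneg: "0 \<le> B_term x j"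
  unfolding B_term_def using gauss_orbit_bounds
  by (intro mult_nonneg_nonneg prod_nonneg ln_inverse_nonneg) auto

lemma B_term_0: "B_term y 0 = ln (1 / frac y)"
  by (simp add: B_term_def)

lemma B_term_Suc: "B_term y (Suc j) = frac y * B_term (gauss (frac y)) j"
proof -
  have orbit_Suc: "(gauss ^^ Suc k) (frac y) = (gauss ^^ k) (frac (gauss (frac y)))" for k
    by (simp add: funpow_Suc_right del: funpow.simps)
  have "(\<Prod>k<Suc j. (gauss ^^ k) (frac y)) = frac y * (\<Prod>k<j. (gauss ^^ k) (frac (gauss (frac y))))"
    by (simp only: prod.lessThan_Suc_shift orbit_Suc funpow_0)
  then show ?thesis
    unfolding B_term_def orbit_Suc by simp
qed

lemma B_term_frac_cong: "frac a = frac b \<Longrightarrow> B_term a = B_term b"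
  by (simp add: B_term_def fun_eq_iff)

lemma W_term_frac_cong:
  assumes "frac a = frac b"
  shows "W_term a = W_term b"
  by (simp add: W_term_def fun_eq_iff B_term_frac_cong[OF assms])

lemma Bfun_less_infinity_iff: "Bfun x < \<infinity> \<longleftrightarrow> summable (B_term x)"
proof
  assume "Bfun x < \<infinity>"
  then show "summable (B_term x)"
    unfolding Bfun_def by (intro summable_ereal B_term_nonneg) auto
next
  assume "summable (B_term x)"
  then show "Bfun x < \<infinity>"
    unfolding Bfun_def using suminf_ereal_finite by (simp add: less_top)
qed

lemma real_of_Bfun: "summable (B_term x) \<Longrightarrow> real_of_ereal (Bfun x) = suminf (B_term x)"
  unfolding Bfun_def by (simp add: suminf_ereal')

lemma W_converges_iff_summable: "W_converges x \<longleftrightarrow> summable (W_term x)"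
  unfolding W_converges_def by (simp add: summable_iff_convergent)

lemma Wfun_eq_suminf: "Wfun x = suminf (W_term x)"
  unfolding Wfun_def by (simp add: suminf_eq_lim)

lemma Bfun_frac_cong:
  assumes "frac a = frac b"
  shows "Bfun a = Bfun b"
  unfolding Bfun_def B_term_frac_cong[OF assms] ..

lemma W_converges_frac_cong:
  assumes "frac a = frac b"
  shows "W_converges a = W_converges b"
  unfolding W_converges_def W_term_frac_cong[OF assms] ..

lemma Wfun_frac_cong:
  assumes "frac a = frac b"
  shows "Wfun a = Wfun b"
  unfolding Wfun_def W_term_frac_cong[OF assms] ..

lemma Bminus_frac_cong:
  assumes "frac a = frac b"
  shows "Bminus a = Bminus b"
proof -
  have minus: "frac (-a) = frac (-b)" using assms frac_neg_eq_iff by blast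
  show ?thesis
    unfolding Bminus_def Bfun_frac_cong[OF assms] Bfun_frac_cong[OF minus] ..
qed

lemma Wplus_frac_cong:
  assumes "frac a = frac b"
  shows "Wplus a = Wplus b"
proof -
  have minus: "frac (-a) = frac (-b)" using assms frac_neg_eq_iff by blast
  show ?thesis
    unfolding Wplus_def Wfun_frac_cong[OF assms] Wfun_frac_cong[OF minus] ..
qed

lemma Bminus_minus: "Bminus (-x) = - Bminus x"
  by (simp add: Bminus_def diff_divide_distrib)

lemma Wplus_minus: "Wplus (-x) = Wplus x"
  by (simp add: Wplus_def)

lemma summable_suminf_shifted_tail:
  fixes f g :: "nat \<Rightarrow> 'a::{banach, real_normed_field}"
  assumes tail: "\<And>j. f (j + 2) = c * g (j + 1)" and g: "summable g"
  shows "summable f \<and> suminf f = f 0 + f 1 + c * (suminf g - g 0)"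
proof -
  have f_tail: "(\<lambda>j. f (j + 2)) = (\<lambda>j. c * g (Suc j))"
    using tail by simp
  have g_tail: "summable (\<lambda>j. g (Suc j))"
    using g summable_iff_shift[of g 1] by simp
  then have "summable (\<lambda>j. f (j + 2))"
    unfolding f_tail by (rule summable_mult)
  then have f: "summable f"
    using summable_iff_shift[of f 2] by simp
  have "suminf f = (\<Sum>j. f (j + 2)) + (\<Sum>i<2. f i)"
    using suminf_split_initial_segment[OF f] .
  also have "(\<Sum>j. f (j + 2)) = c * (suminf g - g 0)"
    unfolding f_tail suminf_mult[OF g_tail] suminf_split_head[OF g] ..
  finally show ?thesis
    using f by (simp add: numeral_2_eq_2)
qed

lemma frac_minus_unit_interval:
  assumes "0 < x" "x < 1"
  shows "frac (-x) = 1 - x"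
proof -
  have "\<lfloor>-x\<rfloor> = -1" using assms by (simp add: floor_eq_iff)
  then show ?thesis by (simp add: frac_def)
qed

lemma gauss_one_minus:
  assumes "0 < x" "x < 1/2"
  shows "gauss (1 - x) = x / (1 - x)"
proof -
  have "\<lfloor>1 / (1 - x)\<rfloor> = 1" using assms by (simp add: floor_eq_iff field_simps)
  then show ?thesis using assms by (simp add: gauss_def frac_def field_simps)
qed

lemma gauss_ratio_one_minus:
  assumes "0 < x" "x < 1"
  shows "gauss (x / (1 - x)) = gauss x"
proof -
  have "1 / (x / (1 - x)) = 1 / x + of_int (-1)" using assms by (simp add: field_simps)
  then show ?thesis unfolding gauss_def by (simp only: frac_add_of_int_right)
qed

lemma B_term_minus_shift:
  assumes "0 < x" "x < 1/2"
  shows "B_term (-x) (j + 2) = B_term x (j + 1)"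
proof -
  have ratio: "0 \<le> x / (1 - x)" "x / (1 - x) < 1" using assms by (simp_all add: field_simps)
  have "B_term (-x) (Suc (Suc j)) = (1 - x) * B_term (x / (1 - x)) (Suc j)"
    using assms by (simp add: B_term_Suc frac_minus_unit_interval gauss_one_minus)
  also have "\<dots> = (1 - x) * (x / (1 - x)) * B_term (gauss x) j"
    using assms ratio by (simp add: B_term_Suc frac_eq gauss_ratio_one_minus)
  also have "\<dots> = B_term x (Suc j)"
    using assms by (simp add: B_term_Suc frac_eq)
  finally show ?thesis by simp
qed

lemma B_term_minus_1:
  assumes "0 < x" "x < 1/2"
  shows "B_term (-x) 1 = (1 - x) * ln ((1 - x) / x)"
proof -
  have "frac (x / (1 - x)) = x / (1 - x)" using assms by (simp add: frac_eq field_simps)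
  then show ?thesis
    using assms B_term_Suc[of "-x" 0]
    by (simp add: B_term_0 frac_minus_unit_interval gauss_one_minus)
qed

lemma Bfun_minus_finite_and_Bminus:
  assumes "0 < x" "x < 1/2" and finite: "Bfun x < \<infinity>"
  shows "Bfun (-x) < \<infinity> \<and> Bminus x = x / 2 * ln ((1 - x) / x)"
proof -
  have B: "summable (B_term x)" using finite Bfun_less_infinity_iff by blast
  have "summable (B_term (-x)) \<and>
        suminf (B_term (-x)) = B_term (-x) 0 + B_term (-x) 1 + 1 * (suminf (B_term x) - B_term x 0)"
    using B B_term_minus_shift[OF assms(1,2)] by (intro summable_suminf_shifted_tail) auto
  then have B_minus: "summable (B_term (-x))"
    and sum: "suminf (B_term x) - suminf (B_term (-x)) = B_term x 0 - B_term (-x) 0 - B_term (-x) 1"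
    by simp_all
  have "Bminus x = (B_term x 0 - B_term (-x) 0 - B_term (-x) 1) / 2"
    unfolding Bminus_def real_of_Bfun[OF B] real_of_Bfun[OF B_minus] sum ..
  also have "\<dots> = x / 2 * ln ((1 - x) / x)"
    using assms unfolding B_term_minus_1[OF assms(1,2)]
    by (simp add: B_term_0 frac_eq frac_minus_unit_interval ln_div field_simps)
  finally show ?thesis
    using B_minus Bfun_less_infinity_iff by blast
qed

lemma W_converges_minus_and_Wplus:
  assumes "0 < x" "x < 1/2" and converges: "W_converges x"
  shows "W_converges (-x) \<and> Wplus x = x / 2 * ln ((1 - x) / x) - ln (1 - x)"
proof -
  have W: "summable (W_term x)" using converges W_converges_iff_summable by blast
  have "summable (W_term (-x)) \<and>
        suminf (W_term (-x)) = W_term (-x) 0 + W_term (-x) 1 + -1 * (suminf (W_term x) - W_term x 0)"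
    using W B_term_minus_shift[OF assms(1,2)]
    by (intro summable_suminf_shifted_tail) (auto simp: W_term_def)
  then have W_minus: "summable (W_term (-x))"
    and sum: "suminf (W_term x) + suminf (W_term (-x)) = W_term x 0 + W_term (-x) 0 + W_term (-x) 1"
    by simp_all
  have "Wplus x = (W_term x 0 + W_term (-x) 0 + W_term (-x) 1) / 2"
    unfolding Wplus_def Wfun_eq_suminf sum ..
  also have "\<dots> = x / 2 * ln ((1 - x) / x) - ln (1 - x)"
    using assms unfolding W_term_def B_term_minus_1[OF assms(1,2)]
    by (simp add: B_term_0 frac_eq frac_minus_unit_interval ln_div field_simps)
  finally show ?thesis
    using W_minus W_converges_iff_summable by blast
qed

lemma Bminus_closed_form_bounds:
  assumes "0 < (x::real)" "x < 1/2"
  shows "0 \<le> x / 2 * ln ((1 - x) / x) \<and> x / 2 * ln ((1 - x) / x) \<le> 1"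
proof -
  have ratio: "1 \<le> (1 - x) / x" using assms by (simp add: field_simps)
  have "x * ln ((1 - x) / x) \<le> x * ((1 - x) / x - 1)"
    using assms ratio by (intro mult_left_mono ln_le_minus_one) auto
  also have "\<dots> \<le> 1" using assms by (simp add: field_simps)
  finally show ?thesis using assms ratio by simp
qed

lemma minus_ln_one_minus_bounds:
  assumes "0 < (x::real)" "x < 1/2"
  shows "0 \<le> - ln (1 - x) \<and> - ln (1 - x) \<le> 1"
proof -
  have "ln (1 / (1 - x)) \<le> 1 / (1 - x) - 1" using assms by (intro ln_le_minus_one) auto
  also have "\<dots> \<le> 1" using assms by (simp add: field_simps)
  finally show ?thesis using assms by (simp add: ln_div)
qed

lemma irrational_sign_reduction:
  fixes x :: real
  assumes "x \<notin> \<rat>"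
  obtains s where "s = x \<or> s = -x" "0 < frac s" "frac s < 1/2"
proof -
  have not_int: "x \<notin> \<int>" using assms Ints_subset_Rats by blast
  have "frac x \<notin> \<rat>"
  proof
    assume "frac x \<in> \<rat>"
    then have "frac x + of_int \<lfloor>x\<rfloor> \<in> \<rat>" by (intro Rats_add) auto
    then show False using assms by (simp add: frac_def)
  qed
  moreover have "(1/2 :: real) \<in> \<rat>" by simp
  ultimately have "frac x \<noteq> 1/2" by metis
  then consider "frac x < 1/2" | "1/2 < frac x" by linarith
  then show ?thesis
  proof cases
    case 1
    then show ?thesis using that[of x] not_int by simp
  next
    case 2
    then show ?thesis using that[of "-x"] not_int frac_lt_1[of x] by (simp add: frac_neg)
  qed
qed

lemma Bminus_bounded:
  assumes "x \<notin> \<rat>" "Bfun x < \<infinity>" "Bfun (-x) < \<infinity>"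
  shows "\<bar>Bminus x\<bar> \<le> 1"
proof -
  obtain s where s: "s = x \<or> s = -x" and z: "0 < frac s" "frac s < 1/2"
    using irrational_sign_reduction[OF assms(1)] .
  have "Bfun s < \<infinity>" using s assms(2,3) by blast
  moreover have "Bfun (frac s) = Bfun s" by (rule Bfun_frac_cong) simp
  ultimately have "Bminus (frac s) = frac s / 2 * ln ((1 - frac s) / frac s)"
    using Bfun_minus_finite_and_Bminus[OF z] by simp
  moreover have "Bminus s = Bminus (frac s)" by (rule Bminus_frac_cong) simp
  moreover have "\<bar>Bminus x\<bar> = \<bar>Bminus s\<bar>"
    using s by (elim disjE) (simp_all add: Bminus_minus)
  ultimately show ?thesis
    using Bminus_closed_form_bounds[OF z] by simp
qed

lemma Wplus_bounded:
  assumes "x \<notin> \<rat>" "W_converges x" "W_converges (-x)"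
  shows "\<bar>Wplus x\<bar> \<le> 2"
proof -
  obtain s where s: "s = x \<or> s = -x" and z: "0 < frac s" "frac s < 1/2"
    using irrational_sign_reduction[OF assms(1)] .
  have "W_converges s" using s assms(2,3) by blast
  moreover have "W_converges (frac s) = W_converges s" by (rule W_converges_frac_cong) simp
  ultimately have "Wplus (frac s) = frac s / 2 * ln ((1 - frac s) / frac s) - ln (1 - frac s)"
    using W_converges_minus_and_Wplus[OF z] by simp
  moreover have "Wplus s = Wplus (frac s)" by (rule Wplus_frac_cong) simp
  moreover have "Wplus x = Wplus s"
    using s by (elim disjE) (simp_all add: Wplus_minus)
  ultimately show ?thesis
    using Bminus_closed_form_bounds[OF z] minus_ln_one_minus_bounds[OF z] by simp
qed

theorem mainTheorem3:
  shows "(\<forall>x::real. x \<notin> \<rat> \<and> 0 < x \<and> x < 1/2 \<and> Bfun x < \<infinity> \<longrightarrow>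
            Bfun (-x) < \<infinity> \<and> Bminus x = x / 2 * ln ((1 - x) / x))
       \<and> (\<forall>x::real. x \<notin> \<rat> \<and> 0 < x \<and> x < 1/2 \<and> W_converges x \<longrightarrow>
            W_converges (-x) \<and> Wplus x = x / 2 * ln ((1 - x) / x) - ln (1 - x))
       \<and> (\<exists>C::real. \<forall>x::real. x \<notin> \<rat> \<and> Bfun x < \<infinity> \<and> Bfun (-x) < \<infinity> \<longrightarrow>
            \<bar>Bminus x\<bar> \<le> C)
       \<and> (\<exists>C::real. \<forall>x::real. x \<notin> \<rat> \<and> W_converges x \<and> W_converges (-x) \<longrightarrow>
            \<bar>Wplus x\<bar> \<le> C)"
  using Bfun_minus_finite_and_Bminus W_converges_minus_and_Wplus Bminus_bounded Wplus_bounded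
  by blast

end
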